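(* Let $V$ be a vector space over a commutative field $K$, and let $m$ be a product on the tensor coalgebra $T(V)$ such that $(T(V),m,\eta,\Delta,\varepsilon)$ is a bialgebra (its unit is then $1\in V^{\otimes0}$). Define $S:T(V)\to T(V)$ by $S(1)=1$ and, for $n\ge1$ and $p_1,\dots,p_n\in V$, $$S(p_1\top\cdots\top p_n)=-\sum_{c\subseteq\{1,\dots,n-1\}}(-1)^{\mathrm{card}(c)}(p_1\top\cdots\top p_n)_c.$$ Then $S$ is an antipode for $(T(V),m,\eta,\Delta,\varepsilon)$.
   Context: $T(V)=\bigoplus_{n\ge0}V^{\otimes n}$, with $v_1\top\cdots\top v_n$ denoting $v_1\otimes\cdots\otimes v_n\in V^{\otimes n}$ and $1$ the generator of $V^{\otimes0}=K$, is the tensor coalgebra with coproduct $\Delta(v_1\top\cdots\top v_n)=\sum_{k=0}^n(v_1\top\cdots\top v_k)\otimes(v_{k+1}\top\cdots\top v_n)$ and counit $\varepsilon(1)=1$, $\varepsilon(V^{\otimes n})=0$ for $n\ge1$. For $c=\{j_1<\cdots<j_r\}\subseteq\{1,\dots,n-1\}$, $(p_1\top\cdots\top p_n)_c$ is obtained by replacing the $j$-th symbol $\top$ (counted from the left) by the product $m$ for each $j\in c$, i.e. $(p_1\top\cdots\top p_n)_c=(p_1\top\cdots\top p_{j_1})\,(p_{j_1+1}\top\cdots\top p_{j_2})\cdots(p_{j_r+1}\top\cdots\top p_n)$, products taken with $m$. *)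

theory Defs
  imports Main "HOL-Library.Function_Algebras"
begin

text \<open>Model: V is the free K-vector space on a basis type 'b (finitely supported
functions 'b => 'k).  Then V^{\<otimes>n} is identified with finitely supported functions
on words of length n, T(V) with finitely supported functions 'b list => 'k, and
T(V) \<otimes> T(V) with finitely supported functions on pairs of words.\<close>

definition fsupp :: "('a \<Rightarrow> 'k::zero) \<Rightarrow> 'a set" where
  "fsupp f = {x. f x \<noteq> 0}"

definition Vsp :: "('b \<Rightarrow> 'k::field) set" where
  "Vsp = {p. finite (fsupp p)}"

definition TV :: "('b list \<Rightarrow> 'k::field) set" where
  "TV = {x. finite (fsupp x)}"

definition smul :: "'k::field \<Rightarrow> ('a \<Rightarrow> 'k) \<Rightarrow> ('a \<Rightarrow> 'k)" where
  "smul r x = (\<lambda>w. r * x w)"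

definition ebas :: "'b list \<Rightarrow> ('b list \<Rightarrow> 'k::field)" where
  "ebas u = (\<lambda>w. if w = u then 1 else 0)"

definition tens :: "('b \<Rightarrow> 'k::field) list \<Rightarrow> ('b list \<Rightarrow> 'k)" where
  "tens ps = (\<lambda>w. if length w = length ps then (\<Prod>i<length ps. (ps ! i) (w ! i)) else 0)"

definition oneT :: "'b list \<Rightarrow> 'k::field" where
  "oneT = tens []"

definition Delta :: "('b list \<Rightarrow> 'k::field) \<Rightarrow> ('b list \<times> 'b list \<Rightarrow> 'k)" where
  "Delta x = (\<lambda>(u, v). x (u @ v))"

definition epsilon :: "('b list \<Rightarrow> 'k::field) \<Rightarrow> 'k" where
  "epsilon x = x []"

text \<open>Product on T(V) \<otimes> T(V) induced by m: (a\<otimes>b)(c\<otimes>d) = m a c \<otimes> m b d, extended bilinearly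
(expressed on the basis e_u \<otimes> e_v).\<close>
definition mm :: "(('b list \<Rightarrow> 'k::field) \<Rightarrow> ('b list \<Rightarrow> 'k) \<Rightarrow> ('b list \<Rightarrow> 'k))
   \<Rightarrow> ('b list \<times> 'b list \<Rightarrow> 'k) \<Rightarrow> ('b list \<times> 'b list \<Rightarrow> 'k) \<Rightarrow> ('b list \<times> 'b list \<Rightarrow> 'k)" where
  "mm m X Y = (\<lambda>(w1, w2). \<Sum>(u1, u2)\<in>fsupp X. \<Sum>(v1, v2)\<in>fsupp Y.
       X (u1, u2) * Y (v1, v2) * m (ebas u1) (ebas v1) w1 * m (ebas u2) (ebas v2) w2)"

definition is_linear_T :: "(('b list \<Rightarrow> 'k::field) \<Rightarrow> ('b list \<Rightarrow> 'k)) \<Rightarrow> bool" where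
  "is_linear_T f \<longleftrightarrow> (\<forall>x\<in>TV. f x \<in> TV) \<and>
     (\<forall>x\<in>TV. \<forall>y\<in>TV. f (x + y) = f x + f y) \<and>
     (\<forall>r. \<forall>x\<in>TV. f (smul r x) = smul r (f x))"

text \<open>(T(V), m, \<eta>, \<Delta>, \<epsilon>) is a bialgebra, where \<eta>(1) = u.  The coalgebra axioms hold
automatically for the tensor coalgebra.\<close>
definition is_bialgebra ::
  "(('b list \<Rightarrow> 'k::field) \<Rightarrow> ('b list \<Rightarrow> 'k) \<Rightarrow> ('b list \<Rightarrow> 'k)) \<Rightarrow> ('b list \<Rightarrow> 'k) \<Rightarrow> bool" where
  "is_bialgebra m u \<longleftrightarrow>
     u \<in> TV \<and>
     (\<forall>x\<in>TV. \<forall>y\<in>TV. m x y \<in> TV) \<and>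
     (\<forall>y\<in>TV. is_linear_T (\<lambda>x. m x y)) \<and>
     (\<forall>x\<in>TV. is_linear_T (\<lambda>y. m x y)) \<and>
     (\<forall>x\<in>TV. \<forall>y\<in>TV. \<forall>z\<in>TV. m (m x y) z = m x (m y z)) \<and>
     (\<forall>x\<in>TV. m u x = x \<and> m x u = x) \<and>
     (\<forall>x\<in>TV. \<forall>y\<in>TV. Delta (m x y) = mm m (Delta x) (Delta y)) \<and>
     Delta u = (\<lambda>(a, b). u a * u b) \<and>
     (\<forall>x\<in>TV. \<forall>y\<in>TV. epsilon (m x y) = epsilon x * epsilon y) \<and>
     epsilon u = 1"

definition conv_S_id where
  "conv_S_id m S x = (\<Sum>(a, b)\<in>fsupp (Delta x). smul (Delta x (a, b)) (m (S (ebas a)) (ebas b)))"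

definition conv_id_S where
  "conv_id_S m S x = (\<Sum>(a, b)\<in>fsupp (Delta x). smul (Delta x (a, b)) (m (ebas a) (S (ebas b))))"

definition is_antipode where
  "is_antipode m u S \<longleftrightarrow> is_linear_T S \<and>
     (\<forall>x\<in>TV. conv_S_id m S x = smul (epsilon x) u \<and> conv_id_S m S x = smul (epsilon x) u)"

text \<open>Splitting a list at sorted cut positions j_1 < ... < j_r (cut after j-th element).\<close>
fun blocks :: "nat list \<Rightarrow> 'a list \<Rightarrow> 'a list list" where
  "blocks [] ps = [ps]"
| "blocks (j # js) ps = take j ps # blocks (map (\<lambda>i. i - j) js) (drop j ps)"

fun mprod :: "('a \<Rightarrow> 'a \<Rightarrow> 'a) \<Rightarrow> 'a \<Rightarrow> 'a list \<Rightarrow> 'a" where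
  "mprod m e [] = e"
| "mprod m e [x] = x"
| "mprod m e (x # y # xs) = m x (mprod m e (y # xs))"

definition cutprod where
  "cutprod m ps c = mprod m oneT (map tens (blocks (sorted_list_of_set c) ps))"

end

theory Submission
  imports Defs
begin

text \<open>By linearity it suffices to check both antipode identities on basis words \<open>e\<^sub>w\<close>, for which
  \<open>\<Delta> e\<^sub>w = \<Sum>\<^sub>k e\<^bsub>w[..k]\<^esub> \<otimes> e\<^bsub>w[k..]\<^esub>\<close>. Let \<open>F w = word_cut_sum w\<close> be the signed sum of the cut products \<open>(e\<^sub>w)\<^sub>c\<close>,
  so that \<open>S e\<^sub>w = - F w\<close> for \<open>w \<noteq> []\<close>. Grouping the cut sets \<open>c\<close> by their largest element \<open>k\<close>
  gives \<open>F w = e\<^sub>w - \<Sum>\<^bsub>0<k<|w|\<^esub> F (w[..k]) e\<^bsub>w[k..]\<^esub>\<close>, which is precisely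
  \<open>m (S \<otimes> id) \<Delta> e\<^sub>w = 0\<close>; grouping them by their smallest element gives \<open>m (id \<otimes> S) \<Delta> e\<^sub>w = 0\<close>.
  The unit is \<open>1\<close>: \<open>\<Delta> u = u \<otimes> u\<close> makes the support of \<open>u\<close> closed under \<open>w \<mapsto> w w\<close>, and a finite
  such set of words is \<open>{[]}\<close>.\<close>

section \<open>Cut positions and sums over subsets\<close>

lemma sorted_list_of_set_insert_less:
  fixes k :: "'a::linorder"
  assumes "finite A" "\<forall>i\<in>A. k < i"
  shows "sorted_list_of_set (insert k A) = k # sorted_list_of_set A"
  using assms by (subst sorted_list_of_set_unique[symmetric]) (auto simp: card_insert_if)

lemma sorted_list_of_set_insert_greater:
  fixes k :: "'a::linorder"
  assumes "finite A" "\<forall>i\<in>A. i < k"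
  shows "sorted_list_of_set (insert k A) = sorted_list_of_set A @ [k]"
  using assms
  by (subst sorted_list_of_set_unique[symmetric]) (auto simp: card_insert_if sorted_wrt_append)

lemma sorted_list_of_set_image_strict_mono:
  fixes f :: "'a::linorder \<Rightarrow> 'b::linorder"
  assumes "finite A" "strict_mono f"
  shows "sorted_list_of_set (f ` A) = map f (sorted_list_of_set A)"
proof -
  have "sorted_wrt (<) (map f (sorted_list_of_set A))"
    using assms(2) by (auto simp: sorted_wrt_map strict_mono_def intro: sorted_wrt_mono_rel[of _ "(<)"])
  moreover have "card (f ` A) = card A"
    using strict_mono_imp_inj_on[OF assms(2)] by (simp add: card_image)
  ultimately show ?thesis
    using assms(1) by (subst sorted_list_of_set_unique[symmetric]) auto
qed

lemma blocks_map: "blocks js (map f w) = map (map f) (blocks js w)"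
  by (induction js "map f w" arbitrary: w rule: blocks.induct) (auto simp: take_map drop_map)

lemma blocks_ne_Nil: "blocks js w \<noteq> []"
  by (cases js) auto

lemma blocks_snoc:
  assumes "\<forall>i\<in>set js. i \<le> k"
  shows "blocks (js @ [k]) w = blocks js (take k w) @ [drop k w]"
  using assms
proof (induction js w arbitrary: k rule: blocks.induct)
  case (2 j js w)
  have "blocks (map (\<lambda>i. i - j) js @ [k - j]) (drop j w)
      = blocks (map (\<lambda>i. i - j) js) (take (k - j) (drop j w)) @ [drop (k - j) (drop j w)]"
    using "2.prems" by (intro "2.IH") auto
  then show ?case
    using "2.prems" by (simp add: drop_take min_def)
qed simp

lemma sum_atMost_split_ends:
  assumes "0 < (n::nat)"
  shows "(\<Sum>k\<le>n. f k) = f 0 + (\<Sum>k\<in>{1..<n}. f k) + f n"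
proof -
  have split: "{..n} = insert 0 (insert n {1..<n})"
    using assms by auto
  show ?thesis
    unfolding split using assms by (simp add: add_ac)
qed

lemma sum_Pow_insert:
  assumes "finite A" "a \<notin> A"
  shows "(\<Sum>c\<in>Pow (insert a A). g c) = (\<Sum>c\<in>Pow A. g c) + (\<Sum>c\<in>Pow A. g (insert a c))"
proof -
  have "inj_on (insert a) (Pow A)"
    using assms by (auto simp: inj_on_def)
  then show ?thesis
    unfolding Pow_insert using assms by (subst sum.union_disjoint) (auto simp: sum.reindex)
qed

lemma sum_Pow_atLeastLessThan_by_Min:
  "(\<Sum>c\<in>Pow {a..<n::nat}. g c) = g {} + (\<Sum>k\<in>{a..<n}. \<Sum>c\<in>Pow {Suc k..<n}. g (insert k c))"
proof (induction "n - a" arbitrary: a)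
  case (Suc d)
  then have "a < n"
    by simp
  then have split: "{a..<n} = insert a {Suc a..<n}"
    by auto
  have "(\<Sum>c\<in>Pow {a..<n}. g c)
      = (\<Sum>c\<in>Pow {Suc a..<n}. g c) + (\<Sum>c\<in>Pow {Suc a..<n}. g (insert a c))"
    unfolding split by (rule sum_Pow_insert) auto
  also have "(\<Sum>c\<in>Pow {Suc a..<n}. g c)
      = g {} + (\<Sum>k\<in>{Suc a..<n}. \<Sum>c\<in>Pow {Suc k..<n}. g (insert k c))"
    using Suc.hyps(2) by (intro Suc.hyps(1)) simp
  finally show ?case
    by (simp add: sum.atLeast_Suc_lessThan[OF \<open>a < n\<close>] ac_simps)
qed simp

lemma sum_Pow_atLeastLessThan_by_Max:
  "(\<Sum>c\<in>Pow {a..<n::nat}. g c) = g {} + (\<Sum>k\<in>{a..<n}. \<Sum>c\<in>Pow {a..<k}. g (insert k c))"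
proof (induction n)
  case (Suc n)
  show ?case
  proof (cases "a \<le> n")
    case True
    then have split: "{a..<Suc n} = insert n {a..<n}"
      by auto
    have "(\<Sum>c\<in>Pow {a..<Suc n}. g c)
        = (\<Sum>c\<in>Pow {a..<n}. g c) + (\<Sum>c\<in>Pow {a..<n}. g (insert n c))"
      unfolding split by (rule sum_Pow_insert) auto
    with Suc True show ?thesis
      by (simp add: add.assoc)
  qed simp
qed simp

lemma sum_Pow_atLeastLessThan_shift:
  assumes "k \<le> n"
  shows "(\<Sum>c\<in>Pow {Suc k..<n}. g c) = (\<Sum>d\<in>Pow {1..<n - k}. g ((+) k ` d))"
proof (rule sum.reindex_cong)
  show "inj_on (image ((+) k)) (Pow {1..<n - k})"
    by (rule inj_on_image_Pow) simp
  have "(+) k ` {1..<n - k} = {Suc k..<n}"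
    using assms by (simp only: image_add_atLeastLessThan) simp
  then show "Pow {Suc k..<n} = image ((+) k) ` Pow {1..<n - k}"
    by (simp add: image_Pow_surj)
qed simp

lemma sum_fun_apply: "(\<Sum>i\<in>A. f i) x = (\<Sum>i\<in>A. f i x)"
  by (induction A rule: infinite_finite_induct) auto

lemma TV_zero: "0 \<in> TV"
  by (simp add: TV_def fsupp_def)

lemma TV_add:
  assumes "x \<in> TV" "y \<in> TV"
  shows "x + y \<in> TV"
proof -
  have "fsupp (x + y) \<subseteq> fsupp x \<union> fsupp y"
    by (auto simp: fsupp_def)
  then show ?thesis
    using assms unfolding TV_def by (auto intro: finite_subset)
qed

lemma TV_smul: "x \<in> TV \<Longrightarrow> smul r x \<in> TV"
  unfolding TV_def fsupp_def smul_def by (auto elim!: finite_subset[rotated])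

lemma TV_sum: "(\<And>i. i \<in> A \<Longrightarrow> f i \<in> TV) \<Longrightarrow> (\<Sum>i\<in>A. f i) \<in> TV"
  by (induction A rule: infinite_finite_induct) (auto intro: TV_add TV_zero)

lemma ebas_TV: "ebas w \<in> TV"
  unfolding TV_def fsupp_def ebas_def by simp

lemma smul_sum: "smul r (\<Sum>i\<in>A. f i) = (\<Sum>i\<in>A. smul r (f i))"
  by (rule ext) (simp add: smul_def sum_fun_apply sum_distrib_left)

lemma smul_one [simp]: "smul 1 x = x"
  by (simp add: smul_def)

lemma smul_minus_left: "smul (- r) x = - smul r x"
  by (simp add: smul_def fun_eq_iff)

lemma is_linear_T_zero: "is_linear_T f \<Longrightarrow> f 0 = 0"
  using TV_zero by (auto simp: is_linear_T_def smul_def dest!: bspec[of _ _ 0] spec[of _ 0])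

lemma is_linear_T_uminus: "is_linear_T f \<Longrightarrow> x \<in> TV \<Longrightarrow> f (- x) = - f x"
  unfolding is_linear_T_def by (metis smul_minus_left smul_def mult_1 ext)

lemma is_linear_T_sum:
  assumes "is_linear_T f" "\<And>i. i \<in> A \<Longrightarrow> g i \<in> TV"
  shows "f (\<Sum>i\<in>A. g i) = (\<Sum>i\<in>A. f (g i))"
  using assms(2)
proof (induction A rule: infinite_finite_induct)
  case (insert a A)
  then have "f (g a + sum g A) = f (g a) + f (sum g A)"
    using assms(1) by (simp add: is_linear_T_def TV_sum)
  moreover have "f (sum g A) = (\<Sum>i\<in>A. f (g i))"
    using insert by simp
  ultimately show ?case
    by (simp only: sum.insert[OF insert.hyps])
qed (simp_all add: is_linear_T_zero[OF assms(1)])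

lemma is_linear_T_signed_sum:
  assumes "is_linear_T f" "\<And>i. i \<in> A \<Longrightarrow> g i \<in> TV"
  shows "f (\<Sum>i\<in>A. smul (s i) (g i)) = (\<Sum>i\<in>A. smul (s i) (f (g i)))"
  using assms by (simp add: is_linear_T_sum TV_smul is_linear_T_def)

section \<open>Basis words and the unit\<close>

definition vbas :: "'b \<Rightarrow> ('b \<Rightarrow> 'k::field)" where
  "vbas b = (\<lambda>b'. if b' = b then 1 else 0)"

lemma vbas_Vsp: "vbas b \<in> Vsp"
  unfolding Vsp_def fsupp_def vbas_def by simp

lemma tens_map_vbas: "tens (map vbas w) = ebas w"
proof
  fix v
  have "(\<Prod>i<length w. vbas (w ! i) (v ! i)) = 0"
    if len: "length v = length w" and ne: "v \<noteq> w"
  proof (rule prod_zero)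
    obtain i where "i < length w" "v ! i \<noteq> w ! i"
      using len ne list_eq_iff_nth_eq by metis
    then show "\<exists>i\<in>{..<length w}. vbas (w ! i) (v ! i) = 0"
      by (intro bexI[of _ i]) (auto simp: vbas_def)
  qed simp
  then show "tens (map vbas w) v = ebas w v"
    by (cases "v = w") (auto simp: tens_def ebas_def vbas_def simp del: prod_zero_iff)
qed

lemma oneT_eq_ebas_Nil: "oneT = ebas []"
  using tens_map_vbas[of "[]"] by (simp add: oneT_def)

lemma oneT_TV: "oneT \<in> TV"
  by (simp add: oneT_eq_ebas_Nil ebas_TV)

lemma bialgebra_unit_eq_oneT:
  assumes "is_bialgebra m u"
  shows "u = oneT"
proof -
  have u_TV: "u \<in> TV" and Delta_u: "Delta u = (\<lambda>(a, b). u a * u b)" and "epsilon u = 1"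
    using assms by (auto simp: is_bialgebra_def)
  then have u_Nil: "u [] = 1"
    by (simp add: epsilon_def)
  have u_append: "u (v @ v) = u v * u v" for v
    using fun_cong[OF Delta_u, of "(v, v)"] by (simp add: Delta_def)
  have fin: "finite (length ` fsupp u)"
    using u_TV by (simp add: TV_def)
  define L where "L = Max (length ` fsupp u)"
  have "[] \<in> fsupp u"
    using u_Nil by (simp add: fsupp_def)
  then have "L \<in> length ` fsupp u"
    unfolding L_def using fin by (intro Max_in) auto
  then obtain v where "u v \<noteq> 0" "length v = L"
    by (auto simp: fsupp_def)
  then have "v @ v \<in> fsupp u"
    using u_append by (simp add: fsupp_def)
  then have "length (v @ v) \<le> L"
    unfolding L_def by (intro Max_ge fin imageI)
  then have "L = 0"
    using \<open>length v = L\<close> by simp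
  have "u w = 0" if "w \<noteq> []" for w
  proof (rule ccontr)
    assume "u w \<noteq> 0"
    then have "w \<in> fsupp u"
      by (simp add: fsupp_def)
    then have "length w \<le> L"
      unfolding L_def by (intro Max_ge fin imageI)
    with \<open>L = 0\<close> that show False
      by simp
  qed
  then show ?thesis
    by (auto simp: oneT_def tens_def u_Nil)
qed

lemma Delta_convolution_eq_counit:
  assumes x: "x \<in> TV"
    and words: "\<And>w. (\<Sum>k\<le>length w. G (take k w) (drop k w)) = (if w = [] then y else 0)"
  shows "(\<Sum>(a, b)\<in>fsupp (Delta x). smul (Delta x (a, b)) (G a b)) = smul (epsilon x) y"
proof -
  have fin: "finite (fsupp x)"
    using x by (simp add: TV_def)
  have "(\<Sum>(a, b)\<in>fsupp (Delta x). smul (Delta x (a, b)) (G a b))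
      = (\<Sum>(w, k)\<in>(SIGMA w:fsupp x. {..length w}). smul (x w) (G (take k w) (drop k w)))"
    by (rule sum.reindex_bij_witness[where i = "\<lambda>(w, k). (take k w, drop k w)"
          and j = "\<lambda>(a, b). (a @ b, length a)"])
      (auto simp: fsupp_def Delta_def)
  also have "\<dots> = (\<Sum>w\<in>fsupp x. smul (x w) (\<Sum>k\<le>length w. G (take k w) (drop k w)))"
    using fin by (simp add: sum.Sigma[symmetric] smul_sum)
  also have "\<dots> = (\<Sum>w\<in>fsupp x. if w = [] then smul (x w) y else 0)"
    by (rule sum.cong) (auto simp: words smul_def fun_eq_iff)
  also have "\<dots> = smul (epsilon x) y"
    using fin by (auto simp: epsilon_def fsupp_def smul_def fun_eq_iff)
  finally show ?thesis .
qed

section \<open>Signed cut sums\<close>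

locale TV_algebra =
  fixes m :: "('b list \<Rightarrow> 'k::field) \<Rightarrow> ('b list \<Rightarrow> 'k) \<Rightarrow> ('b list \<Rightarrow> 'k)"
  assumes mult_TV: "x \<in> TV \<Longrightarrow> y \<in> TV \<Longrightarrow> m x y \<in> TV"
    and linear_left: "y \<in> TV \<Longrightarrow> is_linear_T (\<lambda>x. m x y)"
    and linear_right: "x \<in> TV \<Longrightarrow> is_linear_T (m x)"
    and assoc: "x \<in> TV \<Longrightarrow> y \<in> TV \<Longrightarrow> z \<in> TV \<Longrightarrow> m (m x y) z = m x (m y z)"
    and one_left: "x \<in> TV \<Longrightarrow> m oneT x = x"
    and one_right: "x \<in> TV \<Longrightarrow> m x oneT = x"

lemma bialgebra_imp_TV_algebra:
  assumes "is_bialgebra m u"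
  shows "TV_algebra m"
  using assms bialgebra_unit_eq_oneT[OF assms] by unfold_locales (auto simp: is_bialgebra_def)

context TV_algebra
begin

lemma mult_uminus_left: "x \<in> TV \<Longrightarrow> y \<in> TV \<Longrightarrow> m (- x) y = - m x y"
  by (rule is_linear_T_uminus[OF linear_left])

lemma mult_uminus_right: "x \<in> TV \<Longrightarrow> y \<in> TV \<Longrightarrow> m x (- y) = - m x y"
  by (rule is_linear_T_uminus[OF linear_right])

lemma mprod_TV: "\<forall>x\<in>set xs. x \<in> TV \<Longrightarrow> xs \<noteq> [] \<Longrightarrow> mprod m e xs \<in> TV"
  by (induction xs rule: induct_list012) (auto intro: mult_TV)

lemma mprod_Cons: "xs \<noteq> [] \<Longrightarrow> mprod m e (x # xs) = m x (mprod m e xs)"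
  by (cases xs) auto

lemma mprod_snoc:
  "\<forall>x\<in>set xs. x \<in> TV \<Longrightarrow> xs \<noteq> [] \<Longrightarrow> y \<in> TV \<Longrightarrow> mprod m e (xs @ [y]) = m (mprod m e xs) y"
proof (induction xs rule: induct_list012)
  case (3 x z xs)
  then show ?case
    by (simp add: assoc mprod_TV)
qed simp_all

definition word_cut_prod :: "'b list \<Rightarrow> nat set \<Rightarrow> 'b list \<Rightarrow> 'k" where
  "word_cut_prod w c = mprod m oneT (map ebas (blocks (sorted_list_of_set c) w))"

definition word_cut_sum :: "'b list \<Rightarrow> 'b list \<Rightarrow> 'k" where
  "word_cut_sum w = (\<Sum>c\<in>Pow {1..<length w}. smul ((-1) ^ card c) (word_cut_prod w c))"

lemma word_cut_prod_TV: "word_cut_prod w c \<in> TV"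
  unfolding word_cut_prod_def by (rule mprod_TV) (auto simp: ebas_TV blocks_ne_Nil)

lemma word_cut_sum_TV: "word_cut_sum w \<in> TV"
  unfolding word_cut_sum_def by (intro TV_sum TV_smul word_cut_prod_TV)

lemma word_cut_prod_empty: "word_cut_prod w {} = ebas w"
  by (simp add: word_cut_prod_def)

lemma cutprod_map_vbas: "cutprod m (map vbas w) c = word_cut_prod w c"
  by (simp add: cutprod_def word_cut_prod_def blocks_map tens_map_vbas comp_def)

lemma word_cut_prod_insert_Max:
  assumes "finite c" "\<forall>i\<in>c. i < k"
  shows "word_cut_prod w (insert k c) = m (word_cut_prod (take k w) c) (ebas (drop k w))"
proof -
  have "sorted_list_of_set (insert k c) = sorted_list_of_set c @ [k]"
    using assms by (rule sorted_list_of_set_insert_greater)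
  moreover have "blocks (sorted_list_of_set c @ [k]) w
      = blocks (sorted_list_of_set c) (take k w) @ [drop k w]"
    using assms by (intro blocks_snoc) auto
  ultimately show ?thesis
    unfolding word_cut_prod_def by (simp add: mprod_snoc ebas_TV blocks_ne_Nil)
qed

lemma word_cut_prod_insert_Min:
  assumes "finite d" "\<forall>i\<in>d. 0 < i"
  shows "word_cut_prod w (insert k ((+) k ` d)) = m (ebas (take k w)) (word_cut_prod (drop k w) d)"
proof -
  have "sorted_list_of_set (insert k ((+) k ` d)) = k # sorted_list_of_set ((+) k ` d)"
    using assms by (intro sorted_list_of_set_insert_less) auto
  also have "sorted_list_of_set ((+) k ` d) = map ((+) k) (sorted_list_of_set d)"
    using assms by (intro sorted_list_of_set_image_strict_mono) (auto simp: strict_mono_def)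
  finally show ?thesis
    unfolding word_cut_prod_def by (simp add: mprod_Cons blocks_ne_Nil comp_def)
qed

lemma word_cut_sum_mult_left:
  "y \<in> TV \<Longrightarrow> m (word_cut_sum v) y
     = (\<Sum>c\<in>Pow {1..<length v}. smul ((-1) ^ card c) (m (word_cut_prod v c) y))"
  unfolding word_cut_sum_def
  by (rule is_linear_T_signed_sum[OF linear_left]) (simp_all add: word_cut_prod_TV)

lemma word_cut_sum_mult_right:
  "x \<in> TV \<Longrightarrow> m x (word_cut_sum v)
     = (\<Sum>c\<in>Pow {1..<length v}. smul ((-1) ^ card c) (m x (word_cut_prod v c)))"
  unfolding word_cut_sum_def
  by (rule is_linear_T_signed_sum[OF linear_right]) (simp_all add: word_cut_prod_TV)

lemma word_cut_sum_last_cut: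
  assumes "w \<noteq> []"
  shows "word_cut_sum w = ebas w - (\<Sum>k\<in>{1..<length w}. m (word_cut_sum (take k w)) (ebas (drop k w)))"
proof -
  let ?g = "\<lambda>c. smul ((-1) ^ card c) (word_cut_prod w c)"
  have last_cut_at:
    "(\<Sum>c\<in>Pow {1..<k}. ?g (insert k c)) = - m (word_cut_sum (take k w)) (ebas (drop k w))"
    if "k \<in> {1..<length w}" for k
  proof -
    have "?g (insert k c) = - smul ((-1) ^ card c) (m (word_cut_prod (take k w) c) (ebas (drop k w)))"
      if "c \<in> Pow {1..<k}" for c
    proof -
      have "finite c" "k \<notin> c" "\<forall>i\<in>c. i < k"
        using that finite_subset[OF _ finite_atLeastLessThan] by auto
      then show ?thesis
        by (simp add: word_cut_prod_insert_Max smul_minus_left)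
    qed
    then show ?thesis
      using that by (simp add: word_cut_sum_mult_left ebas_TV sum_negf min_def)
  qed
  have "word_cut_sum w = ?g {} + (\<Sum>k\<in>{1..<length w}. \<Sum>c\<in>Pow {1..<k}. ?g (insert k c))"
    unfolding word_cut_sum_def by (rule sum_Pow_atLeastLessThan_by_Max)
  also have "\<dots> = ebas w + (\<Sum>k\<in>{1..<length w}. - m (word_cut_sum (take k w)) (ebas (drop k w)))"
    using last_cut_at by (simp add: word_cut_prod_empty)
  finally show ?thesis
    by (simp add: sum_negf)
qed

lemma word_cut_sum_first_cut:
  assumes "w \<noteq> []"
  shows "word_cut_sum w = ebas w - (\<Sum>k\<in>{1..<length w}. m (ebas (take k w)) (word_cut_sum (drop k w)))"
proof -
  let ?g = "\<lambda>c. smul ((-1) ^ card c) (word_cut_prod w c)"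
  have first_cut_at:
    "(\<Sum>c\<in>Pow {Suc k..<length w}. ?g (insert k c)) = - m (ebas (take k w)) (word_cut_sum (drop k w))"
    if "k \<in> {1..<length w}" for k
  proof -
    have "?g (insert k ((+) k ` d))
        = - smul ((-1) ^ card d) (m (ebas (take k w)) (word_cut_prod (drop k w) d))"
      if "d \<in> Pow {1..<length w - k}" for d
    proof -
      have "finite d" "\<forall>i\<in>d. 0 < i"
        using that finite_subset[OF _ finite_atLeastLessThan] by auto
      moreover have "card ((+) k ` d) = card d" "k \<notin> (+) k ` d"
        using \<open>\<forall>i\<in>d. 0 < i\<close> by (auto simp: card_image)
      ultimately show ?thesis
        by (simp add: word_cut_prod_insert_Min smul_minus_left)
    qed
    moreover have "(\<Sum>c\<in>Pow {Suc k..<length w}. ?g (insert k c))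
        = (\<Sum>d\<in>Pow {1..<length w - k}. ?g (insert k ((+) k ` d)))"
      using that by (intro sum_Pow_atLeastLessThan_shift) simp
    ultimately show ?thesis
      by (simp add: word_cut_sum_mult_right ebas_TV sum_negf)
  qed
  have "word_cut_sum w
      = ?g {} + (\<Sum>k\<in>{1..<length w}. \<Sum>c\<in>Pow {Suc k..<length w}. ?g (insert k c))"
    unfolding word_cut_sum_def by (rule sum_Pow_atLeastLessThan_by_Min)
  also have "\<dots> = ebas w + (\<Sum>k\<in>{1..<length w}. - m (ebas (take k w)) (word_cut_sum (drop k w)))"
    using first_cut_at by (simp add: word_cut_prod_empty)
  finally show ?thesis
    by (simp add: sum_negf)
qed

end

locale cut_sum_map = TV_algebra m
  for m :: "('b list \<Rightarrow> 'k::field) \<Rightarrow> ('b list \<Rightarrow> 'k) \<Rightarrow> ('b list \<Rightarrow> 'k)" +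
  fixes S :: "('b list \<Rightarrow> 'k) \<Rightarrow> ('b list \<Rightarrow> 'k)"
  assumes S_linear: "is_linear_T S"
    and S_one: "S oneT = oneT"
    and S_word: "w \<noteq> [] \<Longrightarrow> S (ebas w) = - word_cut_sum w"
begin

lemma S_TV: "x \<in> TV \<Longrightarrow> S x \<in> TV"
  using S_linear by (simp add: is_linear_T_def)

lemma convolution_S_id_word:
  "(\<Sum>k\<le>length w. m (S (ebas (take k w))) (ebas (drop k w))) = (if w = [] then oneT else 0)"
proof (cases "w = []")
  case False
  then have "(\<Sum>k\<le>length w. m (S (ebas (take k w))) (ebas (drop k w)))
      = ebas w - (\<Sum>k\<in>{1..<length w}. m (word_cut_sum (take k w)) (ebas (drop k w))) - word_cut_sum w"
    by (simp add: sum_atMost_split_ends S_one S_word mult_uminus_left sum_negf ebas_TV word_cut_sum_TV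
        one_left one_right S_TV oneT_TV flip: oneT_eq_ebas_Nil)
  with False show ?thesis
    by (simp add: word_cut_sum_last_cut)
qed (simp add: S_one one_left oneT_TV flip: oneT_eq_ebas_Nil)

lemma convolution_id_S_word:
  "(\<Sum>k\<le>length w. m (ebas (take k w)) (S (ebas (drop k w)))) = (if w = [] then oneT else 0)"
proof (cases "w = []")
  case False
  then have "(\<Sum>k\<le>length w. m (ebas (take k w)) (S (ebas (drop k w))))
      = ebas w - (\<Sum>k\<in>{1..<length w}. m (ebas (take k w)) (word_cut_sum (drop k w))) - word_cut_sum w"
    by (simp add: sum_atMost_split_ends S_one S_word mult_uminus_right sum_negf ebas_TV word_cut_sum_TV
        one_left one_right S_TV oneT_TV flip: oneT_eq_ebas_Nil)
  with False show ?thesis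
    by (simp add: word_cut_sum_first_cut)
qed (simp add: S_one one_left oneT_TV flip: oneT_eq_ebas_Nil)

theorem antipode: "is_antipode m oneT S"
  unfolding is_antipode_def conv_S_id_def conv_id_S_def
  by (simp add: S_linear Delta_convolution_eq_counit convolution_S_id_word convolution_id_S_word)

end

theorem mainTheorem16:
  fixes m :: "('b list \<Rightarrow> 'k::field) \<Rightarrow> ('b list \<Rightarrow> 'k) \<Rightarrow> ('b list \<Rightarrow> 'k)"
    and u :: "'b list \<Rightarrow> 'k"
    and S :: "('b list \<Rightarrow> 'k) \<Rightarrow> ('b list \<Rightarrow> 'k)"
  assumes bialg: "is_bialgebra m u"
    and S_lin: "is_linear_T S"
    and S_one: "S oneT = oneT"
    and S_tens: "\<And>ps. ps \<noteq> [] \<Longrightarrow> set ps \<subseteq> Vsp \<Longrightarrow>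
        S (tens ps) = - (\<Sum>c\<in>Pow {1..<length ps}. smul ((-1) ^ card c) (cutprod m ps c))"
  shows "is_antipode m u S"
proof -
  interpret TV_algebra m
    using bialg by (rule bialgebra_imp_TV_algebra)
  have "S (ebas w) = - word_cut_sum w" if "w \<noteq> []" for w
  proof -
    have "set (map vbas w) \<subseteq> Vsp"
      using vbas_Vsp by auto
    with that show ?thesis
      using S_tens[of "map vbas w"] by (simp add: tens_map_vbas cutprod_map_vbas word_cut_sum_def)
  qed
  then interpret cut_sum_map m S
    using S_lin S_one by unfold_locales
  show ?thesis
    using antipode bialgebra_unit_eq_oneT[OF bialg] by simp
qed

end
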